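(* For $\mathbf k\in\mathbb Z^r_{++}$ let $\tilde C^d(\lambda,\mu,\mathbf k)=\frac{\prod_{1\le i\le j\le r}(\lambda+\mu-1-\frac d2(i+j-2))_{k_i+k_j}}{\prod_{1\le i<j\le r+1}(\lambda+\mu-1-\frac d2(i+j-3))_{k_i+k_j}}$ with $k_{r+1}=0$. If $1\le m_1\le m_2\le r$, $k_1=\dots=k_{m_1}$ and $k_{m_2+1}=0$, then $$\{(\lambda,\mu)\in\mathbb C^2:\tilde C^d(\lambda,\mu,\mathbf k)=0\}\subset\Bigl\{(\lambda,\mu):\ \tfrac d2(m_1-1)-2k_1+2\le\lambda+\mu\le d(m_2-1)-k_{m_2}+1\Bigr\}$$ if $k_1\ge1$, and the set is empty if $k_1=0$. In particular, for $m=0,1,\dots,r-1$, if $k_{m+1}=0$ then $\tilde C^d(\lambda,\mu,\mathbf k)\ne0$ for all real $\lambda,\mu\ge\frac d2m$.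
   Context: $r\ge1$ integer, $d>0$ real, $\mathbb Z^r_{++}=\{\mathbf k\in\mathbb Z^r:k_1\ge\dots\ge k_r\ge0\}$, $(a)_m=a(a+1)\cdots(a+m-1)$. $\tilde C^d$ is a rational function of $\lambda+\mu$; its zero set means the points where the reduced rational function vanishes (the inequalities in particular force $\lambda+\mu$ real). *)

theory Defs
  imports "HOL-Computational_Algebra.Polynomial"
begin

definition poch_poly :: "complex \<Rightarrow> nat \<Rightarrow> complex poly" where
  "poch_poly a n = (\<Prod>l<n. [: a + of_nat l, 1 :])"

definition kext :: "nat \<Rightarrow> (nat \<Rightarrow> nat) \<Rightarrow> nat \<Rightarrow> nat" where
  "kext r k i = (if i \<le> r then k i else 0)"

text \<open>Numerator of tilde C^d as a polynomial in x = lambda + mu.\<close>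
definition Ct_num :: "real \<Rightarrow> nat \<Rightarrow> (nat \<Rightarrow> nat) \<Rightarrow> complex poly" where
  "Ct_num d r k = (\<Prod>(i,j)\<in>{(i,j). 1 \<le> i \<and> i \<le> j \<and> j \<le> r}.
      poch_poly (- 1 - complex_of_real (d/2) * (of_nat i + of_nat j - 2)) (kext r k i + kext r k j))"

definition Ct_den :: "real \<Rightarrow> nat \<Rightarrow> (nat \<Rightarrow> nat) \<Rightarrow> complex poly" where
  "Ct_den d r k = (\<Prod>(i,j)\<in>{(i,j). 1 \<le> i \<and> i < j \<and> j \<le> r + 1}.
      poch_poly (- 1 - complex_of_real (d/2) * (of_nat i + of_nat j - 3)) (kext r k i + kext r k j))"

text \<open>The reduced rational function Ct_num/Ct_den vanishes at x.\<close>
definition Ct_zero :: "real \<Rightarrow> nat \<Rightarrow> (nat \<Rightarrow> nat) \<Rightarrow> complex \<Rightarrow> bool" where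
  "Ct_zero d r k x \<longleftrightarrow> order x (Ct_den d r k) < order x (Ct_num d r k)"

end

theory Submission imports Defs begin

text \<open>Write \<open>a\<^sub>i\<^sub>j = -1 - d/2 (i + j - 2)\<close>. Splitting each numerator factor as
  \<open>(a\<^sub>i\<^sub>j)_(k\<^sub>i + k\<^sub>j) = (a\<^sub>i\<^sub>j)_(k\<^sub>i + k\<^sub>j\<^sub>+\<^sub>1) \<cdot> (a\<^sub>i\<^sub>j + k\<^sub>i + k\<^sub>j\<^sub>+\<^sub>1)_(k\<^sub>j - k\<^sub>j\<^sub>+\<^sub>1)\<close>,
  the first factor is exactly the denominator factor of the pair \<open>(i, j + 1)\<close>. Hence the reduced
  rational function is the polynomial \<open>\<Prod>\<^sub>i\<^sub>\<le>\<^sub>j (a\<^sub>i\<^sub>j + k\<^sub>i + k\<^sub>j\<^sub>+\<^sub>1)_(k\<^sub>j - k\<^sub>j\<^sub>+\<^sub>1)\<close>, whose zeros are the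
  reals \<open>1 + d/2 (i + j - 2) - k\<^sub>i - k\<^sub>j\<^sub>+\<^sub>1 - l\<close> with \<open>0 \<le> l < k\<^sub>j - k\<^sub>j\<^sub>+\<^sub>1\<close>. Such a zero
  needs a descent \<open>k\<^sub>j\<^sub>+\<^sub>1 < k\<^sub>j\<close>, which forces \<open>m\<^sub>1 \<le> j \<le> m\<^sub>2\<close>, and the bounds follow.\<close>

lemma poch_poly_add: "poch_poly a (n + m) = poch_poly a n * poch_poly (a + of_nat n) m"
  by (induction m) (simp_all add: poch_poly_def algebra_simps)

lemma poch_poly_nonzero: "poch_poly a n \<noteq> 0"
  by (simp add: poch_poly_def)

lemma poly_poch_poly_eq_0_iff: "poly (poch_poly a n) x = 0 \<longleftrightarrow> (\<exists>l<n. x = - a - of_nat l)"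
  by (auto simp add: poch_poly_def poly_prod algebra_simps eq_neg_iff_add_eq_0)

lemma order_lt_order_mult_iff:
  fixes p q :: "'a::idom poly"
  assumes "p \<noteq> 0" "q \<noteq> 0"
  shows "order x p < order x (p * q) \<longleftrightarrow> poly q x = 0"
  using assms order_mult[of p q x] order_root[of q x] by auto

definition upper_pairs :: "nat \<Rightarrow> (nat \<times> nat) set" where
  "upper_pairs r = {(i,j). 1 \<le> i \<and> i \<le> j \<and> j \<le> r}"

lemma finite_upper_pairs: "finite (upper_pairs r)"
  by (rule finite_subset[of _ "{1..r} \<times> {1..r}"]) (auto simp: upper_pairs_def)

definition Ct_reduced :: "real \<Rightarrow> nat \<Rightarrow> (nat \<Rightarrow> nat) \<Rightarrow> complex poly" where
  "Ct_reduced d r k = (\<Prod>(i,j)\<in>upper_pairs r.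
      poch_poly (- 1 - complex_of_real (d/2) * (of_nat i + of_nat j - 2) + of_nat (kext r k i + kext r k (j+1)))
        (kext r k j - kext r k (j+1)))"

lemma Ct_den_reindex:
  "Ct_den d r k = (\<Prod>(i,j)\<in>upper_pairs r.
      poch_poly (- 1 - complex_of_real (d/2) * (of_nat i + of_nat j - 2)) (kext r k i + kext r k (j+1)))"
  unfolding Ct_den_def upper_pairs_def
  by (rule prod.reindex_bij_witness[of _ "\<lambda>(i,j). (i,j+1)" "\<lambda>(i,j). (i,j-1)"]) auto

lemma Ct_den_nonzero: "Ct_den d r k \<noteq> 0"
  unfolding Ct_den_reindex using finite_upper_pairs
  by (simp add: prod_zero_iff poch_poly_nonzero case_prod_beta)

lemma Ct_reduced_nonzero: "Ct_reduced d r k \<noteq> 0"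
  unfolding Ct_reduced_def using finite_upper_pairs
  by (simp add: prod_zero_iff poch_poly_nonzero case_prod_beta)

lemma antimono_on_kext:
  assumes "antimono_on {1..r} k"
  shows "antimono_on {1..} (kext r k)"
proof (rule monotone_onI)
  fix i j :: nat assume "i \<in> {1..}" "j \<in> {1..}" "i \<le> j"
  then show "kext r k j \<le> kext r k i"
    using monotone_onD[OF assms, of i j] by (auto simp: kext_def)
qed

lemma Ct_num_eq_Ct_den_mult:
  assumes mono: "antimono_on {1..r} k"
  shows "Ct_num d r k = Ct_den d r k * Ct_reduced d r k"
proof -
  have split: "kext r k i + kext r k j = (kext r k i + kext r k (j+1)) + (kext r k j - kext r k (j+1))"
    if "(i,j) \<in> upper_pairs r" for i j
    using that monotone_onD[OF antimono_on_kext[OF mono], of j "j+1"] by (auto simp: upper_pairs_def)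
  have "Ct_num d r k = (\<Prod>(i,j)\<in>upper_pairs r.
      poch_poly (- 1 - complex_of_real (d/2) * (of_nat i + of_nat j - 2)) (kext r k i + kext r k j))"
    unfolding Ct_num_def upper_pairs_def by simp
  also have "\<dots> = Ct_den d r k * Ct_reduced d r k"
    unfolding Ct_den_reindex Ct_reduced_def prod.distrib[symmetric]
  proof (rule prod.cong[OF refl], clarify)
    fix i j assume "(i,j) \<in> upper_pairs r"
    then show "poch_poly (- 1 - complex_of_real (d/2) * (of_nat i + of_nat j - 2)) (kext r k i + kext r k j) =
      poch_poly (- 1 - complex_of_real (d/2) * (of_nat i + of_nat j - 2)) (kext r k i + kext r k (j+1)) *
      poch_poly (- 1 - complex_of_real (d/2) * (of_nat i + of_nat j - 2) + of_nat (kext r k i + kext r k (j+1)))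
        (kext r k j - kext r k (j+1))"
      by (subst split) (simp_all only: poch_poly_add)
  qed
  finally show ?thesis .
qed

lemma Ct_zero_iff:
  assumes mono: "antimono_on {1..r} k"
  shows "Ct_zero d r k x \<longleftrightarrow> (\<exists>i j l. 1 \<le> i \<and> i \<le> j \<and> j \<le> r \<and> kext r k (j+1) + l < k j \<and>
     x = complex_of_real (1 + d/2 * (real i + real j - 2) - real (k i + kext r k (j+1) + l)))"
    (is "_ \<longleftrightarrow> ?roots")
proof -
  have "Ct_zero d r k x \<longleftrightarrow> poly (Ct_reduced d r k) x = 0"
    by (simp add: Ct_zero_def Ct_num_eq_Ct_den_mult[OF mono] order_lt_order_mult_iff
        Ct_den_nonzero Ct_reduced_nonzero)
  also have "\<dots> \<longleftrightarrow> (\<exists>i j l. 1 \<le> i \<and> i \<le> j \<and> j \<le> r \<and> l < kext r k j - kext r k (j+1) \<and>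
      x = 1 + complex_of_real (d/2) * (of_nat i + of_nat j - 2) - of_nat (kext r k i + kext r k (j+1)) - of_nat l)"
    unfolding Ct_reduced_def poly_prod using finite_upper_pairs
    by (auto simp: prod_zero_iff case_prod_beta poly_poch_poly_eq_0_iff upper_pairs_def algebra_simps)
  also have "\<dots> \<longleftrightarrow> ?roots"
    by (intro ex_cong1 conj_cong refl) (auto simp: kext_def)
  finally show ?thesis .
qed

lemma jump_index_le:
  assumes mono: "antimono_on {1..r} k"
    and "kext r k (m+1) = 0" and "j \<le> r" and "kext r k (j+1) < k j"
  shows "j \<le> m"
proof (rule ccontr)
  assume "\<not> j \<le> m"
  then have "kext r k j \<le> kext r k (m+1)"
    using monotone_onD[OF antimono_on_kext[OF mono], of "m+1" j] by simp
  then show False using assms(2-4) by (simp add: kext_def)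
qed

lemma jump_index_ge:
  assumes "\<forall>i\<in>{1..m}. k i = k 1" and "m \<le> r" and "1 \<le> j" and "kext r k (j+1) < k j"
  shows "m \<le> j"
proof (rule ccontr)
  assume "\<not> m \<le> j"
  then have "j \<in> {1..m}" "j+1 \<in> {1..m}" and "j+1 \<le> r"
    using assms(2,3) by simp_all
  then have "k j = k 1" "k (j+1) = k 1"
    using assms(1) by blast+
  then show False using assms(4) \<open>j+1 \<le> r\<close> by (simp add: kext_def)
qed

lemma half_sum_le:
  fixes d :: real
  assumes "0 \<le> d" "i \<le> m" "j \<le> m"
  shows "d/2 * (real i + real j - 2) \<le> d * (real m - 1)"
proof -
  have "d/2 * (real i + real j - 2) \<le> d/2 * (2 * real m - 2)"
    using assms by (intro mult_left_mono) simp_all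
  then show ?thesis by (simp add: algebra_simps)
qed

lemma Ct_zero_bounds:
  assumes "d > 0" and mono: "antimono_on {1..r} k"
    and "1 \<le> m1" "m1 \<le> m2" "m2 \<le> r" and const: "\<forall>i\<in>{1..m1}. k i = k 1"
    and tail: "kext r k (m2 + 1) = 0" and "Ct_zero d r k x"
  shows "\<exists>t. x = complex_of_real t \<and> d/2 * (real m1 - 1) - 2 * real (k 1) + 2 \<le> t \<and>
       t \<le> d * (real m2 - 1) - real (k m2) + 1"
proof -
  obtain i j l where ij: "1 \<le> i" "i \<le> j" "j \<le> r" and jump: "kext r k (j+1) + l < k j"
    and x: "x = complex_of_real (1 + d/2 * (real i + real j - 2) - real (k i + kext r k (j+1) + l))"
    using Ct_zero_iff[OF mono, THEN iffD1, OF \<open>Ct_zero d r k x\<close>] by blast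
  define t where "t = 1 + d/2 * (real i + real j - 2) - real (k i + kext r k (j+1) + l)"
  have "m1 \<le> j" using jump_index_ge[OF const, of r j] jump ij assms(4,5) by linarith
  have "j \<le> m2" using jump_index_le[OF mono tail] jump ij by simp
  have "d/2 * (real m1 - 1) \<le> d/2 * (real i + real j - 2)"
    using ij \<open>m1 \<le> j\<close> \<open>d > 0\<close> by (intro mult_left_mono) simp_all
  moreover have "d/2 * (real i + real j - 2) \<le> d * (real m2 - 1)"
    using half_sum_le[of d i m2 j] ij \<open>j \<le> m2\<close> \<open>d > 0\<close> by simp
  moreover have "k j \<le> k 1" "k i \<le> k 1" "k m2 \<le> k i"
    using monotone_onD[OF mono] ij \<open>j \<le> m2\<close> assms(5) by simp_all
  ultimately have "d/2 * (real m1 - 1) - 2 * real (k 1) + 2 \<le> t" "t \<le> d * (real m2 - 1) - real (k m2) + 1"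
    using jump unfolding t_def by linarith+
  then show ?thesis using x t_def by blast
qed

lemma Ct_zero_imp_pos:
  assumes mono: "antimono_on {1..r} k" and "Ct_zero d r k x"
  shows "0 < k 1"
proof -
  obtain i j l where "1 \<le> i" "i \<le> j" "j \<le> r" "kext r k (j+1) + l < k j"
    using Ct_zero_iff[OF mono, THEN iffD1, OF \<open>Ct_zero d r k x\<close>] by blast
  then show ?thesis using monotone_onD[OF mono, of 1 j] by simp
qed

lemma Ct_zero_lt:
  assumes "d > 0" and mono: "antimono_on {1..r} k" and "m < r" "k (m+1) = 0"
    and "Ct_zero d r k x"
  shows "\<exists>t. x = complex_of_real t \<and> t < d * real m"
proof -
  obtain i j l where ij: "1 \<le> i" "i \<le> j" "j \<le> r" and jump: "kext r k (j+1) + l < k j"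
    and x: "x = complex_of_real (1 + d/2 * (real i + real j - 2) - real (k i + kext r k (j+1) + l))"
    using Ct_zero_iff[OF mono, THEN iffD1, OF \<open>Ct_zero d r k x\<close>] by blast
  have "kext r k (m+1) = 0" using assms(3,4) by (simp add: kext_def)
  then have "j \<le> m" using jump_index_le[OF mono] ij jump by simp
  then have "d/2 * (real i + real j - 2) \<le> d * (real m - 1)"
    using half_sum_le[of d i m j] ij \<open>d > 0\<close> by simp
  moreover have "1 \<le> real (k i)" using monotone_onD[OF mono, of i j] ij jump by simp
  moreover have "d * (real m - 1) = d * real m - d" by (simp add: algebra_simps)
  ultimately have "1 + d/2 * (real i + real j - 2) - real (k i + kext r k (j+1) + l) < d * real m"
    using \<open>d > 0\<close> unfolding of_nat_add by linarith
  with x show ?thesis by blast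
qed

theorem proposition8p6:
  fixes d :: real and r :: nat and k :: "nat \<Rightarrow> nat"
  assumes "r \<ge> 1" and "d > 0"
    and mono: "\<forall>i j. 1 \<le> i \<and> i \<le> j \<and> j \<le> r \<longrightarrow> k j \<le> k i"
  shows "(\<forall>m1 m2. 1 \<le> m1 \<and> m1 \<le> m2 \<and> m2 \<le> r \<and> (\<forall>i\<in>{1..m1}. k i = k 1) \<and> kext r k (m2 + 1) = 0 \<longrightarrow>
            (k 1 \<ge> 1 \<longrightarrow>
               {(lam :: complex, mu :: complex). Ct_zero d r k (lam + mu)}
               \<subseteq> {(lam, mu). \<exists>t::real. lam + mu = complex_of_real t \<and>
                     d/2 * (real m1 - 1) - 2 * real (k 1) + 2 \<le> t \<and>
                     t \<le> d * (real m2 - 1) - real (k m2) + 1}) \<and>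
            (k 1 = 0 \<longrightarrow> {(lam :: complex, mu :: complex). Ct_zero d r k (lam + mu)} = {}))
       \<and> (\<forall>m < r. k (m + 1) = 0 \<longrightarrow>
            (\<forall>lam mu :: real. lam \<ge> d/2 * real m \<and> mu \<ge> d/2 * real m \<longrightarrow>
               \<not> Ct_zero d r k (complex_of_real (lam + mu))))"
proof -
  have anti: "antimono_on {1..r} k"
    using mono by (auto intro: monotone_onI)
  have "{(lam :: complex, mu :: complex). Ct_zero d r k (lam + mu)}
          \<subseteq> {(lam, mu). \<exists>t::real. lam + mu = complex_of_real t \<and>
                d/2 * (real m1 - 1) - 2 * real (k 1) + 2 \<le> t \<and>
                t \<le> d * (real m2 - 1) - real (k m2) + 1}"
    if "1 \<le> m1" "m1 \<le> m2" "m2 \<le> r" "\<forall>i\<in>{1..m1}. k i = k 1" "kext r k (m2 + 1) = 0"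
    for m1 m2
    using Ct_zero_bounds[OF \<open>d > 0\<close> anti that] by auto
  moreover have "{(lam :: complex, mu :: complex). Ct_zero d r k (lam + mu)} = {}" if "k 1 = 0"
    using Ct_zero_imp_pos[OF anti] that by auto
  moreover have "\<not> Ct_zero d r k (complex_of_real (lam + mu))"
    if m: "m < r" "k (m + 1) = 0" and lam_mu: "lam \<ge> d/2 * real m" "mu \<ge> d/2 * real m" for m lam mu
  proof
    assume "Ct_zero d r k (complex_of_real (lam + mu))"
    then obtain t where "complex_of_real (lam + mu) = complex_of_real t" "t < d * real m"
      using Ct_zero_lt[OF \<open>d > 0\<close> anti m] by blast
    then have "lam + mu < d * real m" by (simp only: of_real_eq_iff)
    then show False using lam_mu by linarith
  qed
  ultimately show ?thesis by blast
qed

end
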